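(* Let $n\ge4$. $\mathbb G^n_S$ is the orthogonal direct sum of the $n$-dimensional subspace $\mathbb{CPI}^n_S$ and the $\frac{n(n-3)}2$-dimensional subspace $\mathbb C^n_S$. Every $\mathcal G\in\mathbb G^n_S$ has a unique decomposition $\mathcal G=\mathcal G_{cpi}+\mathcal G_{cyclic}$ with $\mathcal G_{cpi}\in\mathbb{CPI}^n_S$ and $\mathcal G_{cyclic}\in\mathbb C^n_S$, these being the orthogonal projections of $\mathcal G$ onto the two subspaces.
   Context: $\mathbb G^n_S$ is the space of complete undirected weighted graphs without loops on $V_1,\dots,V_n$ with edge weights $d_{i,j}=d_{j,i}$, identified with $\mathbb R^{\binom n2}$ with the standard inner product. $\mathbb{CPI}^n_S$ is the subspace of graphs with $d_{j,k}=\omega_j+\omega_k$ for some reals $\omega_1,\dots,\omega_n$ (the closed path independent graphs). $\mathbb C^n_S$ is the span of all vectors $\mathbf b^n_{i,j,k,s}$ (distinct $i,j,k,s$) having $d_{i,j}=1,d_{j,k}=-1,d_{k,s}=1,d_{s,i}=-1$ and all other entries 0. *)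

theory Defs
  imports "HOL-Analysis.Analysis"
begin

text \<open>Vertices V_1..V_n are the elements of a finite type 'n (n = CARD('n)).
A complete undirected loopless weighted graph is represented by its symmetric
weight matrix with zero diagonal, an element of real^'n^'n.\<close>

definition graphS :: "(real^'n^'n) set" where
  "graphS = {d. (\<forall>i j. d$i$j = d$j$i) \<and> (\<forall>i. d$i$i = 0)}"

definition cpiS :: "(real^'n^'n) set" where
  "cpiS = {d \<in> graphS. \<exists>\<omega>::'n \<Rightarrow> real. \<forall>j k. j \<noteq> k \<longrightarrow> d$j$k = \<omega> j + \<omega> k}"

definition bvec :: "'n \<Rightarrow> 'n \<Rightarrow> 'n \<Rightarrow> 'n \<Rightarrow> real^'n^'n" where
  "bvec i j k s = (\<chi> a b.
      if {a,b} = {i,j} \<or> {a,b} = {k,s} then 1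
      else if {a,b} = {j,k} \<or> {a,b} = {s,i} then -1 else 0)"

definition cycS :: "(real^'n^'n) set" where
  "cycS = span {bvec i j k s | i j k s. distinct [i,j,k,s]}"

definition is_orth_proj :: "(real^'n^'n) set \<Rightarrow> real^'n^'n \<Rightarrow> real^'n^'n \<Rightarrow> bool" where
  "is_orth_proj U x p \<longleftrightarrow> p \<in> U \<and> (\<forall>u\<in>U. orthogonal (x - p) u)"

end

theory Submission
  imports Defs
begin

text \<open>A graph d is orthogonal to the cycle vector b_{i,j,k,s} exactly when
  d_{i,j} + d_{k,s} = d_{j,k} + d_{s,i}. These balance conditions say that the quantity
  (d_{j,p} + d_{j,q} - d_{p,q}) / 2 does not depend on the two further vertices p, q, and
  taking it as \<omega>_j exhibits d as closed path independent. So the orthogonal complement of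
  the cyclic subspace within the graphs is the CPI subspace, which gives the orthogonal
  decomposition. The CPI subspace is the injective linear image of \<real>^n, and the graphs
  have dimension n choose 2, so the cyclic part has dimension n(n-1)/2 - n = n(n-3)/2.\<close>

lemma subset_sums_span_if_orthogonal_complement:
  fixes S U B :: "'a::euclidean_space set"
  assumes "subspace S" "B \<subseteq> S"
    and "\<And>z. z \<in> S \<Longrightarrow> (\<And>b. b \<in> B \<Longrightarrow> orthogonal z b) \<Longrightarrow> z \<in> U"
  shows "S \<subseteq> {u + w | u w. u \<in> U \<and> w \<in> span B}"
proof
  fix x assume "x \<in> S"
  obtain w z where w: "w \<in> span B" and z: "\<And>v. v \<in> span B \<Longrightarrow> orthogonal z v"
    and x: "x = w + z"
    using orthogonal_subspace_decomp_exists by blast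
  have "w \<in> S" using w assms(1,2) by (meson span_minimal subsetD)
  then have "z \<in> S" using assms(1) \<open>x \<in> S\<close> x subspace_diff[of S x w] by simp
  then have "z \<in> U" using assms(3) z by (simp add: span_base)
  moreover have "x = z + w" using x by (simp add: add.commute)
  ultimately show "x \<in> {u + w | u w. u \<in> U \<and> w \<in> span B}" using w by blast
qed

lemma orthogonal_subspaces_Int:
  fixes U W :: "'a::real_inner set"
  assumes "subspace U" "subspace W" "\<forall>u\<in>U. \<forall>w\<in>W. orthogonal u w"
  shows "U \<inter> W = {0}"
  using assms by (auto simp: subspace_0 orthogonal_self[symmetric])

lemma dim_sums_orthogonal:
  fixes U W :: "'a::euclidean_space set"
  assumes "subspace U" "subspace W" "\<forall>u\<in>U. \<forall>w\<in>W. orthogonal u w"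
  shows "dim {u + w | u w. u \<in> U \<and> w \<in> W} = dim U + dim W"
  using dim_sums_Int[OF assms(1,2)] orthogonal_subspaces_Int[OF assms] by simp

lemma ex1_sums_orthogonal:
  fixes U W :: "'a::real_inner set"
  assumes "subspace U" "subspace W" "\<forall>u\<in>U. \<forall>w\<in>W. orthogonal u w"
    and "x \<in> {u + w | u w. u \<in> U \<and> w \<in> W}"
  shows "\<exists>!p. fst p \<in> U \<and> snd p \<in> W \<and> x = fst p + snd p"
proof -
  obtain u w where uw: "u \<in> U" "w \<in> W" "x = u + w" using assms(4) by blast
  show ?thesis
  proof (rule ex1I[of _ "(u, w)"])
    fix p :: "'a \<times> 'a" assume p: "fst p \<in> U \<and> snd p \<in> W \<and> x = fst p + snd p"
    then have "u - fst p = snd p - w" using uw by (simp add: algebra_simps)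
    moreover have "u - fst p \<in> U" "snd p - w \<in> W" using assms p uw by (simp_all add: subspace_diff)
    ultimately have "u - fst p \<in> U \<inter> W" by simp
    then have "fst p = u" using orthogonal_subspaces_Int[OF assms(1-3)] by simp
    then show "p = (u, w)" using p uw by (simp add: prod_eq_iff)
  qed (use uw in simp)
qed

lemma is_orth_proj_sums_orthogonal:
  assumes "\<forall>u\<in>U. \<forall>w\<in>W. orthogonal u w" "u \<in> U" "w \<in> W"
  shows "is_orth_proj U (u + w) u" "is_orth_proj W (u + w) w"
  using assms by (auto simp: is_orth_proj_def orthogonal_commute)

lemma ex_other_than_two:
  assumes "CARD('a::finite) \<ge> 3"
  shows "\<exists>r::'a. r \<noteq> j \<and> r \<noteq> k"
proof -
  have "CARD('a) - card {j, k} \<le> card (UNIV - {j, k})"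
    by (rule diff_card_le_card_Diff) simp
  moreover have "card {j, k} \<le> 2" by (simp add: card_insert_if)
  ultimately have "card (UNIV - {j, k}) \<noteq> 0" using assms by linarith
  then obtain r where "r \<in> UNIV - {j, k}" by (metis card.empty ex_in_conv)
  then show ?thesis by blast
qed

lemma sum_potential_if_four_cycles_balanced:
  fixes D :: "'a \<Rightarrow> 'a \<Rightarrow> real"
  assumes third: "\<And>j k :: 'a. \<exists>r. r \<noteq> j \<and> r \<noteq> k"
    and sym: "\<And>j k. D j k = D k j"
    and balanced: "\<And>i j k s. distinct [i,j,k,s] \<Longrightarrow> D i j + D k s = D j k + D s i"
  shows "\<exists>\<omega>. \<forall>j k. j \<noteq> k \<longrightarrow> D j k = \<omega> j + \<omega> k"
proof -
  \<comment> \<open>h j p q is the value of \<omega> j forced by the triangle j, p, q\<close>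
  define h where "h j p q = (D j p + D j q - D p q) / 2" for j p q
  have h_swap: "h j p q = h j q p" for j p q
    by (simp add: h_def sym[of p q])
  have h_move: "h j p q = h j p q'" if "distinct [j,p,q]" "distinct [j,p,q']" for j p q q'
  proof (cases "q = q'")
    case False
    then have "D j q + D p q' = D q p + D q' j" using that by (intro balanced) auto
    then show ?thesis by (simp add: h_def sym[of j q'] sym[of p q])
  qed simp
  have h_indep: "h j p q = h j p' q'"
    if "distinct [j,p,q]" "distinct [j,p',q']" for j p q p' q'
  proof (cases "p' = q")
    case True
    have "h j p q = h j q p" by (rule h_swap)
    also have "\<dots> = h j q q'" using that True by (intro h_move) auto
    finally show ?thesis using True by simp
  next
    case False
    have "h j p q = h j q p" by (rule h_swap)
    also have "\<dots> = h j q p'" using that False by (intro h_move) auto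
    also have "\<dots> = h j p' q" by (rule h_swap)
    also have "\<dots> = h j p' q'" using that False by (intro h_move) auto
    finally show ?thesis .
  qed
  obtain p :: "'a \<Rightarrow> 'a" where p: "\<forall>j. j \<noteq> p j"
    using choice[of "\<lambda>j r. j \<noteq> r"] third by metis
  obtain q :: "'a \<Rightarrow> 'a" where q: "\<forall>j. j \<noteq> q j \<and> p j \<noteq> q j"
    using choice[of "\<lambda>j r. j \<noteq> r \<and> p j \<noteq> r"] third by metis
  have pq: "distinct [j, p j, q j]" for j using p q by simp
  have "\<forall>j k. j \<noteq> k \<longrightarrow> D j k = h j (p j) (q j) + h k (p k) (q k)"
  proof (intro allI impI)
    fix j k :: 'a assume "j \<noteq> k"
    obtain r where "r \<noteq> j" "r \<noteq> k" using third[of j k] by blast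
    then have "h j (p j) (q j) = h j k r" "h k (p k) (q k) = h k j r"
      using \<open>j \<noteq> k\<close> pq[of j] pq[of k] by (auto intro!: h_indep)
    moreover have "D j k = h j k r + h k j r"
      by (simp add: h_def sym[of k j] sym[of r k] field_simps)
    ultimately show "D j k = h j (p j) (q j) + h k (p k) (q k)" by simp
  qed
  then show ?thesis by (rule exI[of _ "\<lambda>j. h j (p j) (q j)"])
qed

definition mat_unit :: "'n \<Rightarrow> 'n \<Rightarrow> real^'n^'n" where
  "mat_unit a b = (\<chi> x y. if x = a \<and> y = b then 1 else 0)"

lemma inner_mat_unit: "inner d (mat_unit a b) = d$a$b"
proof -
  have "inner d (mat_unit a b) = (\<Sum>x\<in>UNIV. \<Sum>y\<in>UNIV. d$x$y * (if x = a \<and> y = b then 1 else 0))"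
    by (simp add: inner_vec_def mat_unit_def)
  also have "\<dots> = (\<Sum>x\<in>UNIV. if x = a then d$x$b else 0)"
    by (rule sum.cong) (auto simp: if_distrib cong: if_cong)
  finally show ?thesis by simp
qed

lemma bvec_eq_mat_units:
  assumes "distinct [i,j,k,s]"
  shows "bvec i j k s = mat_unit i j + mat_unit j i + mat_unit k s + mat_unit s k
    - mat_unit j k - mat_unit k j - mat_unit s i - mat_unit i s"
  using assms unfolding bvec_def mat_unit_def
  by (simp add: vec_eq_iff doubleton_eq_iff) auto

lemma inner_bvec:
  assumes "distinct [i,j,k,s]"
  shows "inner d (bvec i j k s) = d$i$j + d$j$i + d$k$s + d$s$k - d$j$k - d$k$j - d$s$i - d$i$s"
  using assms by (simp add: bvec_eq_mat_units inner_diff_right inner_add_right inner_mat_unit)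

lemma subspace_graphS: "subspace graphS"
  unfolding subspace_def graphS_def by simp

lemma bvec_in_graphS: "distinct [i,j,k,s] \<Longrightarrow> bvec i j k s \<in> graphS"
  unfolding graphS_def bvec_def by (auto simp: insert_commute)

lemma subspace_cycS: "subspace cycS"
  unfolding cycS_def by (rule subspace_span)

lemma cycS_subset_graphS: "cycS \<subseteq> graphS"
  unfolding cycS_def by (rule span_minimal) (auto intro: bvec_in_graphS subspace_graphS)

definition edge_graph :: "'n set \<Rightarrow> real^'n^'n" where
  "edge_graph A = (\<chi> x y. if x \<noteq> y \<and> {x,y} = A then 1 else 0)"

lemma edge_graph_in_graphS: "edge_graph A \<in> graphS"
  unfolding edge_graph_def graphS_def by (auto simp: insert_commute)

lemma inner_edge_graph:
  assumes "x \<noteq> y"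
  shows "inner d (edge_graph {x,y}) = d$x$y + d$y$x"
proof -
  have "edge_graph {x,y} = mat_unit x y + mat_unit y x"
    using assms unfolding edge_graph_def mat_unit_def by (auto simp: vec_eq_iff doubleton_eq_iff)
  then show ?thesis by (simp add: inner_add_right inner_mat_unit)
qed

lemma edge_graph_eq_one_iff: "edge_graph A $ x $ y = 1 \<longleftrightarrow> x \<noteq> y \<and> A = {x,y}"
  unfolding edge_graph_def by auto

lemma card_2E:
  assumes "card A = 2"
  obtains x y where "x \<noteq> y" "A = {x,y}"
  using assms by (auto simp: card_2_iff)

lemma independent_edge_graphs: "independent (edge_graph ` {A::'n::finite set. card A = 2})"
proof (rule pairwise_orthogonal_independent)
  show "0 \<notin> edge_graph ` {A::'n::finite set. card A = 2}"
  proof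
    assume "0 \<in> edge_graph ` {A::'n::finite set. card A = 2}"
    then obtain A :: "'n set" where "card A = 2" "edge_graph A = 0" by auto
    moreover obtain x y where "x \<noteq> y" "A = {x,y}" using card_2E[OF \<open>card A = 2\<close>] .
    ultimately show False using edge_graph_eq_one_iff[of A x y] by simp
  qed
  show "pairwise orthogonal (edge_graph ` {A::'n::finite set. card A = 2})"
  proof (rule pairwiseI, clarify)
    fix A B :: "'n set" assume "card A = 2" "edge_graph B \<noteq> edge_graph A"
    obtain x y where "x \<noteq> y" "A = {x,y}" using card_2E[OF \<open>card A = 2\<close>] .
    moreover have "B \<noteq> {x,y}" using \<open>edge_graph B \<noteq> edge_graph A\<close> \<open>A = {x,y}\<close> by blast
    moreover have "edge_graph B $ x $ y = 0" "edge_graph B $ y $ x = 0"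
      using \<open>B \<noteq> {x,y}\<close> by (auto simp: edge_graph_def insert_commute)
    ultimately show "orthogonal (edge_graph B) (edge_graph A)"
      by (simp add: orthogonal_def inner_edge_graph)
  qed
qed

lemma span_edge_graphs: "span (edge_graph ` {A::'n::finite set. card A = 2}) = graphS"
proof
  show "span (edge_graph ` {A. card A = 2}) \<subseteq> graphS"
    by (rule span_minimal) (auto intro: edge_graph_in_graphS subspace_graphS)
  have zero: "z \<in> {0}" if z: "z \<in> graphS"
    and orth: "\<And>b. b \<in> edge_graph ` {A. card A = 2} \<Longrightarrow> orthogonal z b" for z :: "real^'n^'n"
  proof -
    have "z$x$y = 0" for x y
    proof (cases "x = y")
      case False
      then have "orthogonal z (edge_graph {x,y})" by (intro orth) auto
      then show ?thesis using False z by (simp add: orthogonal_def inner_edge_graph graphS_def)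
    qed (use z in \<open>simp add: graphS_def\<close>)
    then show ?thesis by (simp add: vec_eq_iff)
  qed
  have "(graphS :: (real^'n^'n) set)
      \<subseteq> {u + w | u w. u \<in> {0} \<and> w \<in> span (edge_graph ` {A. card A = 2})}"
    by (rule subset_sums_span_if_orthogonal_complement[OF subspace_graphS _ zero])
      (auto simp: edge_graph_in_graphS)
  then show "(graphS :: (real^'n^'n) set) \<subseteq> span (edge_graph ` {A. card A = 2})" by auto
qed

lemma dim_graphS: "dim (graphS :: (real^'n^'n) set) = CARD('n) choose 2"
proof -
  have inj: "inj_on (edge_graph :: 'n::finite set \<Rightarrow> _) {A. card A = 2}"
  proof (rule inj_onI)
    fix A B :: "'n set" assume "A \<in> {A. card A = 2}" and eq: "edge_graph A = edge_graph B"
    obtain x y where "x \<noteq> y" "A = {x,y}" using card_2E \<open>A \<in> _\<close> by blast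
    then have "edge_graph A $ x $ y = 1" by (simp add: edge_graph_eq_one_iff)
    then have "edge_graph B $ x $ y = 1" using eq by simp
    then show "A = B" using \<open>A = {x,y}\<close> by (simp add: edge_graph_eq_one_iff)
  qed
  have "dim (graphS :: (real^'n^'n) set) = card {A::'n::finite set. card A = 2}"
    using dim_span_eq_card_independent[OF independent_edge_graphs[where 'n='n]] card_image[OF inj]
    by (simp add: span_edge_graphs)
  also have "\<dots> = CARD('n) choose 2" using n_subsets[of "UNIV::'n set" 2] by simp
  finally show ?thesis .
qed

definition cpi_graph :: "real^'n \<Rightarrow> real^'n^'n" where
  "cpi_graph \<omega> = (\<chi> j k. if j = k then 0 else \<omega>$j + \<omega>$k)"

lemma linear_cpi_graph: "linear cpi_graph"
  by (rule linearI) (auto simp: cpi_graph_def vec_eq_iff algebra_simps)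

lemma range_cpi_graph: "range cpi_graph = cpiS"
proof
  show "range cpi_graph \<subseteq> cpiS"
    unfolding cpiS_def graphS_def cpi_graph_def by (auto simp: add.commute)
  show "cpiS \<subseteq> range cpi_graph"
  proof
    fix d assume "d \<in> cpiS"
    then obtain \<omega> where g: "d \<in> graphS" and \<omega>: "\<forall>j k. j \<noteq> k \<longrightarrow> d$j$k = \<omega> j + \<omega> k"
      unfolding cpiS_def by auto
    have "d = cpi_graph (\<chi> j. \<omega> j)"
      using g \<omega> unfolding graphS_def cpi_graph_def by (auto simp: vec_eq_iff)
    then show "d \<in> range cpi_graph" by blast
  qed
qed

lemma subspace_cpiS: "subspace cpiS"
  using linear_subspace_image[OF linear_cpi_graph subspace_UNIV] by (simp add: range_cpi_graph)

lemma cpiS_subset_graphS: "cpiS \<subseteq> graphS"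
  unfolding cpiS_def by auto

lemma inj_cpi_graph:
  assumes "CARD('n::finite) \<ge> 3"
  shows "inj (cpi_graph :: real^'n \<Rightarrow> _)"
proof (rule injI)
  fix \<omega> \<nu> :: "real^'n" assume eq: "cpi_graph \<omega> = cpi_graph \<nu>"
  have "\<omega>$j = \<nu>$j" for j
  proof -
    obtain k where "k \<noteq> j" using ex_other_than_two[OF assms] by blast
    moreover obtain l where "l \<noteq> j" "l \<noteq> k" using ex_other_than_two[OF assms] by blast
    moreover have "\<omega>$a + \<omega>$b = \<nu>$a + \<nu>$b" if "a \<noteq> b" for a b
      using arg_cong[OF eq, of "\<lambda>d. d $ a $ b"] that by (simp add: cpi_graph_def)
    ultimately show ?thesis by (smt (verit))  \<comment> \<open>\<omega> j = (d j k + d j l - d k l) / 2\<close>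
  qed
  then show "\<omega> = \<nu>" by (simp add: vec_eq_iff)
qed

lemma dim_cpiS:
  assumes "CARD('n::finite) \<ge> 3"
  shows "dim (cpiS :: (real^'n^'n) set) = CARD('n)"
proof -
  have "dim (range (cpi_graph :: real^'n \<Rightarrow> _)) = dim (UNIV :: (real^'n) set)"
    using inj_cpi_graph[OF assms] by (intro dim_image_eq linear_cpi_graph) simp
  then show ?thesis by (simp add: range_cpi_graph)
qed

lemma cpiS_orthogonal_bvec:
  assumes "x \<in> cpiS" "distinct [i,j,k,s]"
  shows "orthogonal x (bvec i j k s)"
  using assms by (auto simp: cpiS_def orthogonal_def inner_bvec)

lemma cpiS_orthogonal_cycS: "x \<in> cpiS \<Longrightarrow> y \<in> cycS \<Longrightarrow> orthogonal x y"
  unfolding cycS_def by (rule orthogonal_to_span) (auto intro: cpiS_orthogonal_bvec)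

lemma cpiS_if_orthogonal_bvecs:
  assumes "CARD('n::finite) \<ge> 3" and z: "(z::real^'n^'n) \<in> graphS"
    and orth: "\<And>i j k s. distinct [i,j,k,s] \<Longrightarrow> orthogonal z (bvec i j k s)"
  shows "z \<in> cpiS"
proof -
  have sym: "\<And>i j. z$i$j = z$j$i" using z unfolding graphS_def by auto
  have "z$i$j + z$k$s = z$j$k + z$s$i" if "distinct [i,j,k,s]" for i j k s
    using orth[OF that] that unfolding orthogonal_def
    by (simp add: inner_bvec sym[of j i] sym[of s k] sym[of k j] sym[of i s])
  then obtain \<omega> where "\<forall>j k. j \<noteq> k \<longrightarrow> z$j$k = \<omega> j + \<omega> k"
    using sum_potential_if_four_cycles_balanced[of "\<lambda>i j. z$i$j"] ex_other_than_two[OF assms(1)] sym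
    by blast
  then show ?thesis using z unfolding cpiS_def by auto
qed

lemma graphS_eq_sums:
  assumes "CARD('n::finite) \<ge> 3"
  shows "graphS = {x + y | x y. x \<in> (cpiS :: (real^'n^'n) set) \<and> y \<in> cycS}"
proof
  show "graphS \<subseteq> {x + y | x y. x \<in> (cpiS :: (real^'n^'n) set) \<and> y \<in> cycS}"
    unfolding cycS_def
  proof (rule subset_sums_span_if_orthogonal_complement[OF subspace_graphS])
    fix z :: "real^'n^'n" assume "z \<in> graphS"
      and "\<And>b. b \<in> {bvec i j k s | i j k s. distinct [i,j,k,s]} \<Longrightarrow> orthogonal z b"
    then show "z \<in> cpiS" by (intro cpiS_if_orthogonal_bvecs[OF assms]) blast+
  qed (auto intro: bvec_in_graphS)
  show "{x + y | x y. x \<in> cpiS \<and> y \<in> cycS} \<subseteq> graphS"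
    using cpiS_subset_graphS cycS_subset_graphS subspace_graphS by (auto intro: subspace_add)
qed

lemma choose_2_eq_add: "n \<ge> 3 \<Longrightarrow> n choose 2 = n + n * (n - 3) div 2"
proof -
  assume "n \<ge> 3"
  then have "n * (n - 1) = 2 * n + n * (n - 3)" by (simp add: algebra_simps diff_mult_distrib2)
  then show ?thesis by (simp add: choose_two)
qed

theorem theorem11:
  assumes "CARD('n::finite) \<ge> 4"
  shows "subspace (graphS :: (real^'n^'n) set)
    \<and> subspace (cpiS :: (real^'n^'n) set) \<and> subspace (cycS :: (real^'n^'n) set)
    \<and> cpiS \<subseteq> (graphS :: (real^'n^'n) set) \<and> cycS \<subseteq> (graphS :: (real^'n^'n) set)
    \<and> dim (cpiS :: (real^'n^'n) set) = CARD('n)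
    \<and> dim (cycS :: (real^'n^'n) set) = CARD('n) * (CARD('n) - 3) div 2
    \<and> (\<forall>x \<in> (cpiS :: (real^'n^'n) set). \<forall>y \<in> cycS. orthogonal x y)
    \<and> graphS = {x + y | x y. x \<in> (cpiS :: (real^'n^'n) set) \<and> y \<in> cycS}
    \<and> (\<forall>G \<in> (graphS :: (real^'n^'n) set).
          (\<exists>!p. fst p \<in> cpiS \<and> snd p \<in> cycS \<and> G = fst p + snd p)
        \<and> (\<forall>a b. a \<in> cpiS \<and> b \<in> cycS \<and> G = a + b \<longrightarrow>
                 is_orth_proj cpiS G a \<and> is_orth_proj cycS G b))"
proof -
  have n3: "CARD('n) \<ge> 3" using assms by simp
  have orth: "\<forall>x \<in> (cpiS :: (real^'n^'n) set). \<forall>y \<in> cycS. orthogonal x y"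
    using cpiS_orthogonal_cycS by blast
  note sums = graphS_eq_sums[OF n3]
  have "CARD('n) choose 2 = CARD('n) + dim (cycS :: (real^'n^'n) set)"
    using dim_sums_orthogonal[OF subspace_cpiS subspace_cycS orth] dim_graphS[where 'n='n]
      dim_cpiS[OF n3] sums
    by simp
  then have dim_cyc: "dim (cycS :: (real^'n^'n) set) = CARD('n) * (CARD('n) - 3) div 2"
    using choose_2_eq_add[OF n3] by simp
  show ?thesis
    using subspace_graphS subspace_cpiS subspace_cycS cpiS_subset_graphS cycS_subset_graphS
      dim_cpiS[OF n3] dim_cyc orth sums is_orth_proj_sums_orthogonal[OF orth]
      ex1_sums_orthogonal[OF subspace_cpiS subspace_cycS orth]
    by auto
qed

end
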